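(* Let $\alpha_1,\alpha_2,\alpha_3\in\mathbb{C}$. For arrays $\mathbf{x}=(x_s)_{s\in\mathbb{Z}}$, $\mathbf{y}=(y_s)_{s\in\mathbb{Z}}$ and $v\in\mathbb{Z}$ write $z_i=x_{v+i}$, $w_i=y_{v+i}$, and $D=\alpha_3^2z_1^6+2\alpha_2\alpha_3z_0z_1^4z_2+(\alpha_2^2-4\alpha_1)z_0^2z_1^2z_2^2-4\alpha_3z_0^3z_2^3$. Consider the conditions (for all $v\in\mathbb{Z}$): (E) $z_0^2z_3^2+\alpha_1z_1^2z_2^2+\alpha_2z_0z_1z_2z_3+\alpha_3(z_0z_2^3+z_1^3z_3)=0$; (Coh) $z_0^2z_3=z_{-1}z_2^2$; (R1) $z_3=\dfrac{-\alpha_3z_1^3-\alpha_2z_0z_1z_2+w_1}{2z_0^2}$; (R2) $w_2=\dfrac{\alpha_3^2z_1^6+\alpha_2\alpha_3z_0z_1^4z_2+2\alpha_3z_0^3z_2^3+w_1^2+(-2\alpha_3z_1^3-\alpha_2z_0z_1z_2)w_1}{2z_0^3}$; (S) $w_1^2=D$. (a) For any $\mathbf{x}\in(\mathbb{C}^* )^{\mathbb{Z}}$ satisfying (E) and (Coh) there exists $\mathbf{y}\in\mathbb{C}^{\mathbb{Z}}$ such that $\mathbf{x},\mathbf{y}$ satisfy (R1), (R2), (S). (b) Conversely, if $\mathbf{x}\in(\mathbb{C}^* )^{\mathbb{Z}}$ and $\mathbf{y}\in\mathbb{C}^{\mathbb{Z}}$ satisfy (R1), (R2), (S), then $\mathbf{x}$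 satisfies (E) and (Coh). *)

theory Defs
  imports Complex_Main
begin

definition condE :: "complex \<Rightarrow> complex \<Rightarrow> complex \<Rightarrow> (int \<Rightarrow> complex) \<Rightarrow> int \<Rightarrow> bool" where
  "condE a1 a2 a3 x v \<longleftrightarrow>
     (let z = (\<lambda>i. x (v + i)) in
      (z 0)^2 * (z 3)^2 + a1 * (z 1)^2 * (z 2)^2 + a2 * z 0 * z 1 * z 2 * z 3
      + a3 * (z 0 * (z 2)^3 + (z 1)^3 * z 3) = 0)"

definition condCoh :: "(int \<Rightarrow> complex) \<Rightarrow> int \<Rightarrow> bool" where
  "condCoh x v \<longleftrightarrow>
     (let z = (\<lambda>i. x (v + i)) in (z 0)^2 * z 3 = z (-1) * (z 2)^2)"

definition condR1 :: "complex \<Rightarrow> complex \<Rightarrow> complex \<Rightarrow> (int \<Rightarrow> complex) \<Rightarrow> (int \<Rightarrow> complex) \<Rightarrow> int \<Rightarrow> bool" where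
  "condR1 a1 a2 a3 x y v \<longleftrightarrow>
     (let z = (\<lambda>i. x (v + i)); w = (\<lambda>i. y (v + i)) in
      z 3 = (- a3 * (z 1)^3 - a2 * z 0 * z 1 * z 2 + w 1) / (2 * (z 0)^2))"

definition condR2 :: "complex \<Rightarrow> complex \<Rightarrow> complex \<Rightarrow> (int \<Rightarrow> complex) \<Rightarrow> (int \<Rightarrow> complex) \<Rightarrow> int \<Rightarrow> bool" where
  "condR2 a1 a2 a3 x y v \<longleftrightarrow>
     (let z = (\<lambda>i. x (v + i)); w = (\<lambda>i. y (v + i)) in
      w 2 = (a3^2 * (z 1)^6 + a2 * a3 * z 0 * (z 1)^4 * z 2 + 2 * a3 * (z 0)^3 * (z 2)^3
             + (w 1)^2 + (- 2 * a3 * (z 1)^3 - a2 * z 0 * z 1 * z 2) * w 1) / (2 * (z 0)^3))"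

definition discD :: "complex \<Rightarrow> complex \<Rightarrow> complex \<Rightarrow> (int \<Rightarrow> complex) \<Rightarrow> int \<Rightarrow> complex" where
  "discD a1 a2 a3 x v =
     (let z = (\<lambda>i. x (v + i)) in
      a3^2 * (z 1)^6 + 2 * a2 * a3 * z 0 * (z 1)^4 * z 2
      + (a2^2 - 4 * a1) * (z 0)^2 * (z 1)^2 * (z 2)^2 - 4 * a3 * (z 0)^3 * (z 2)^3)"

definition condS :: "complex \<Rightarrow> complex \<Rightarrow> complex \<Rightarrow> (int \<Rightarrow> complex) \<Rightarrow> (int \<Rightarrow> complex) \<Rightarrow> int \<Rightarrow> bool" where
  "condS a1 a2 a3 x y v \<longleftrightarrow> (y (v + 1))^2 = discD a1 a2 a3 x v"

end

theory Submission
  imports Defs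
begin

text \<open>Solving (R1) for \<open>w\<^sub>1\<close> shows that \<open>y\<close> is forced to be the polynomial
  \<open>y\<^sub>v\<^sub>+\<^sub>1 = 2 z\<^sub>0\<^sup>2 z\<^sub>3 + \<alpha>\<^sub>3 z\<^sub>1\<^sup>3 + \<alpha>\<^sub>2 z\<^sub>0 z\<^sub>1 z\<^sub>2\<close> in \<open>x\<close>. With this substitution
  \<open>w\<^sub>1\<^sup>2 - D = 4 z\<^sub>0\<^sup>2 E\<close>, so (S) is (E); and (R2) becomes
  \<open>w\<^sub>2 = 2 z\<^sub>0 z\<^sub>3\<^sup>2 + \<alpha>\<^sub>3 z\<^sub>2\<^sup>3 + \<alpha>\<^sub>2 z\<^sub>1 z\<^sub>2 z\<^sub>3\<close>, which agrees with the formula for \<open>w\<^sub>2\<close>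
  obtained from (R1) at \<open>v + 1\<close> exactly when (Coh) holds at \<open>v + 1\<close>.\<close>

definition companion :: "complex \<Rightarrow> complex \<Rightarrow> (int \<Rightarrow> complex) \<Rightarrow> int \<Rightarrow> complex" where
  "companion a2 a3 x s =
     2 * (x (s - 1))^2 * x (s + 2) + a3 * (x s)^3 + a2 * x (s - 1) * x s * x (s + 1)"

lemma companion_succ:
  "companion a2 a3 x (v + 1) =
     2 * (x v)^2 * x (v + 3) + a3 * (x (v + 1))^3 + a2 * x v * x (v + 1) * x (v + 2)"
  by (simp add: companion_def add.assoc)

lemma condR1_iff:
  assumes "x v \<noteq> 0"
  shows "condR1 a1 a2 a3 x y v \<longleftrightarrow> y (v + 1) = companion a2 a3 x (v + 1)"
  unfolding condR1_def Let_def companion_succ using assms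
  by (simp add: nonzero_eq_divide_eq) (auto simp: algebra_simps)

lemma condR2_iff:
  assumes "x v \<noteq> 0" and "y (v + 1) = companion a2 a3 x (v + 1)"
  shows "condR2 a1 a2 a3 x y v \<longleftrightarrow>
    y (v + 2) = 2 * x v * (x (v + 3))^2 + a3 * (x (v + 2))^3 + a2 * x (v + 1) * x (v + 2) * x (v + 3)"
proof -
  let ?w1 = "y (v + 1)"
  have "a3^2 * (x (v + 1))^6 + a2 * a3 * x v * (x (v + 1))^4 * x (v + 2)
          + 2 * a3 * (x v)^3 * (x (v + 2))^3 + ?w1^2
          + (- 2 * a3 * (x (v + 1))^3 - a2 * x v * x (v + 1) * x (v + 2)) * ?w1
        = (2 * x v * (x (v + 3))^2 + a3 * (x (v + 2))^3 + a2 * x (v + 1) * x (v + 2) * x (v + 3))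
          * (2 * (x v)^3)"
    unfolding assms(2) companion_succ
    by (simp add: algebra_simps power2_eq_square power3_eq_cube eval_nat_numeral)
  with assms(1) show ?thesis
    by (simp add: condR2_def nonzero_eq_divide_eq eq_commute[of "y (v + 2)"])
qed

lemma condS_iff_condE:
  assumes "x v \<noteq> 0" and "y (v + 1) = companion a2 a3 x (v + 1)"
  shows "condS a1 a2 a3 x y v \<longleftrightarrow> condE a1 a2 a3 x v"
proof -
  let ?E = "(x v)^2 * (x (v + 3))^2 + a1 * (x (v + 1))^2 * (x (v + 2))^2
      + a2 * x v * x (v + 1) * x (v + 2) * x (v + 3)
      + a3 * (x v * (x (v + 2))^3 + (x (v + 1))^3 * x (v + 3))"
  have "(y (v + 1))^2 - discD a1 a2 a3 x v = 4 * (x v)^2 * ?E"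
    unfolding assms(2) companion_succ discD_def Let_def
    by (simp add: algebra_simps power2_eq_square power3_eq_cube eval_nat_numeral)
  with assms(1) show ?thesis
    by (simp add: condS_def condE_def eq_iff_diff_eq_0[of "(y (v + 1))^2"])
qed

lemma companion_eq_iff_condCoh:
  "companion a2 a3 x (v + 2) =
     2 * x v * (x (v + 3))^2 + a3 * (x (v + 2))^3 + a2 * x (v + 1) * x (v + 2) * x (v + 3)
   \<longleftrightarrow> condCoh x (v + 1)"
proof -
  have "companion a2 a3 x (v + 2) =
     2 * (x (v + 1))^2 * x (v + 4) + a3 * (x (v + 2))^3 + a2 * x (v + 1) * x (v + 2) * x (v + 3)"
    using companion_succ[of a2 a3 x "v + 1"] by (simp add: add.assoc)
  then show ?thesis
    by (auto simp: condCoh_def add.assoc ac_simps)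
qed

lemma condR1_R2_S_iff:
  assumes nonzero: "\<forall>s. x s \<noteq> 0"
  shows "(\<forall>v. condR1 a1 a2 a3 x y v \<and> condR2 a1 a2 a3 x y v \<and> condS a1 a2 a3 x y v) \<longleftrightarrow>
    y = companion a2 a3 x \<and> (\<forall>v. condE a1 a2 a3 x v) \<and> (\<forall>v. condCoh x v)"
  (is "?R \<longleftrightarrow> _")
proof
  assume R: ?R
  have y_succ: "y (v + 1) = companion a2 a3 x (v + 1)" for v
    using R condR1_iff nonzero by blast
  have "y s = companion a2 a3 x s" for s
    using y_succ[of "s - 1"] by simp
  moreover have "condE a1 a2 a3 x v" for v
    using R nonzero condS_iff_condE[of x v y] y_succ[of v] by blast
  moreover have "condCoh x v" for v
  proof -
    have "condCoh x (u + 1)" for u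
      using R condR2_iff[of x u y] y_succ[of u] companion_eq_iff_condCoh[of a2 a3 x u]
        y_succ[of "u + 1"] nonzero
      by (auto simp: add.assoc)
    from this[of "v - 1"] show ?thesis by simp
  qed
  ultimately show "y = companion a2 a3 x \<and> (\<forall>v. condE a1 a2 a3 x v) \<and> (\<forall>v. condCoh x v)"
    by blast
next
  assume "y = companion a2 a3 x \<and> (\<forall>v. condE a1 a2 a3 x v) \<and> (\<forall>v. condCoh x v)"
  then show ?R
    using nonzero condR1_iff condR2_iff condS_iff_condE companion_eq_iff_condCoh
    by (auto simp: add.assoc)
qed

theorem theorem6p4:
  fixes a1 a2 a3 :: complex
  shows "(\<forall>x :: int \<Rightarrow> complex. (\<forall>s. x s \<noteq> 0) \<longrightarrow>
            (\<forall>v. condE a1 a2 a3 x v) \<longrightarrow> (\<forall>v. condCoh x v) \<longrightarrow>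
            (\<exists>y :: int \<Rightarrow> complex. \<forall>v. condR1 a1 a2 a3 x y v \<and> condR2 a1 a2 a3 x y v
                                          \<and> condS a1 a2 a3 x y v))
       \<and> (\<forall>(x :: int \<Rightarrow> complex) (y :: int \<Rightarrow> complex). (\<forall>s. x s \<noteq> 0) \<longrightarrow>
            (\<forall>v. condR1 a1 a2 a3 x y v \<and> condR2 a1 a2 a3 x y v \<and> condS a1 a2 a3 x y v) \<longrightarrow>
            (\<forall>v. condE a1 a2 a3 x v) \<and> (\<forall>v. condCoh x v))"
proof (rule conjI; intro allI impI)
  fix x :: "int \<Rightarrow> complex"
  assume "\<forall>s. x s \<noteq> 0" "\<forall>v. condE a1 a2 a3 x v" "\<forall>v. condCoh x v"
  then show "\<exists>y. \<forall>v. condR1 a1 a2 a3 x y v \<and> condR2 a1 a2 a3 x y v \<and> condS a1 a2 a3 x y v"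
    using condR1_R2_S_iff[where y = "companion a2 a3 x"] by blast
next
  fix x y :: "int \<Rightarrow> complex"
  assume "\<forall>s. x s \<noteq> 0"
    and "\<forall>v. condR1 a1 a2 a3 x y v \<and> condR2 a1 a2 a3 x y v \<and> condS a1 a2 a3 x y v"
  then show "(\<forall>v. condE a1 a2 a3 x v) \<and> (\<forall>v. condCoh x v)"
    using condR1_R2_S_iff by blast
qed

end
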